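(* Let $\Gamma$ be any cocompact lattice in the Lie group $\mathrm{Sol}^3$. Then $\Gamma$ is not presentable by a product.
   Context: $\mathrm{Sol}^3$ denotes the solvable Lie group $\mathbb{R}^2\rtimes\mathbb{R}$, where $t\in\mathbb{R}$ acts on $\mathbb{R}^2$ by the matrix $\mathrm{diag}(e^t,e^{-t})$ (the Thurston geometry $\mathrm{Sol}^3$). An infinite group $\Gamma$ is not presentable by a product if for every homomorphism $\varphi\colon \Gamma_1\times\Gamma_2\to\Gamma$ whose image has finite index in $\Gamma$, at least one of $\varphi(\Gamma_1)$, $\varphi(\Gamma_2)$ is finite. *)

theory Defs
  imports "HOL-Analysis.Analysis" "HOL-Algebra.Algebra"
begin

text \<open>The Lie group Sol^3 = R^2 semidirect R, t acting by diag(e^t, e^-t).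
  An element (x, y, t) stands for ((x,y), t); the underlying topology is the
  standard (product) topology on real * real * real.\<close>

definition sol_mult :: "real \<times> real \<times> real \<Rightarrow> real \<times> real \<times> real \<Rightarrow> real \<times> real \<times> real" where
  "sol_mult p q = (case p of (x, y, t) \<Rightarrow> case q of (x', y', t') \<Rightarrow>
      (x + exp t * x', y + exp (- t) * y', t + t'))"

definition Sol3 :: "(real \<times> real \<times> real) monoid" where
  "Sol3 = \<lparr>carrier = UNIV, mult = sol_mult, one = (0, 0, 0)\<rparr>"

text \<open>A cocompact lattice: a discrete subgroup whose quotient Sol3/Gamma is compact,
  i.e. there is a compact K whose Gamma-translates cover the group.\<close>

definition cocompact_lattice :: "(real \<times> real \<times> real) set \<Rightarrow> bool" where
  "cocompact_lattice L \<longleftrightarrow> subgroup L Sol3 \<and> discrete L \<and>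
     (\<exists>K. compact K \<and> (\<Union>g\<in>L. sol_mult g ` K) = UNIV)"

definition finite_index :: "('a, 'm) monoid_scheme \<Rightarrow> 'a set \<Rightarrow> bool" where
  "finite_index G H \<longleftrightarrow> finite (rcosets\<^bsub>G\<^esub> H)"

end

theory Submission
  imports Defs
begin

text \<open>Let \<open>A\<close> and \<open>B\<close> be the images of the two factors; they commute elementwise and their
  product \<open>H\<close> has finite index in \<open>\<Gamma>\<close>, hence \<open>H\<close> is still cocompact in \<open>Sol\<^sup>3\<close>.
  The centraliser of an element with nonzero height \<open>t\<close> is a one-parameter subgroup, and it
  meets the normal subgroup \<open>t = 0\<close> trivially. So if both \<open>A\<close> and \<open>B\<close> are infinite, either
  all of \<open>H\<close> has height \<open>0\<close>, or some element of nonzero height centralises \<open>A \<union> B\<close>, hence \<open>H\<close>.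
  Neither the subgroup \<open>t = 0\<close> nor such a centraliser is cocompact: the first misses large
  heights, the second misses points \<open>(X, 0, 0)\<close> with large \<open>X\<close>.\<close>

definition sol_height :: "real \<times> real \<times> real \<Rightarrow> real" where
  "sol_height p = snd (snd p)"

lemma sol_height [simp]: "sol_height (x, y, t) = t"
  by (simp add: sol_height_def)

lemma sol_mult [simp]: "sol_mult (x, y, t) (x', y', t') = (x + exp t * x', y + exp (- t) * y', t + t')"
  by (simp add: sol_mult_def)

lemma sol_mult_assoc: "sol_mult (sol_mult a b) c = sol_mult a (sol_mult b c)"
  by (cases a; cases b; cases c) (simp add: algebra_simps exp_add exp_diff exp_minus_inverse field_simps)

lemma sol_mult_left_one: "sol_mult (0, 0, 0) a = a"
  by (cases a) simp

lemma sol_height_mult: "sol_height (sol_mult a b) = sol_height a + sol_height b"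
  by (cases a; cases b) simp

lemma sol_mult_idem_iff: "sol_mult u u = u \<longleftrightarrow> u = (0, 0, 0)"
  by (cases u) auto

lemma continuous_on_sol_mult: "continuous_on S (sol_mult a)"
proof -
  obtain x y t where a: "a = (x, y, t)" by (cases a)
  have "sol_mult a = (\<lambda>q. (x + exp t * fst q, y + exp (- t) * fst (snd q), t + snd (snd q)))"
    by (auto simp: a sol_mult_def fun_eq_iff split: prod.splits)
  then show ?thesis by (simp add: continuous_intros)
qed

lemma compact_sol_mult_image: "compact K \<Longrightarrow> compact (sol_mult a ` K)"
  by (simp add: compact_continuous_image continuous_on_sol_mult)

lemma sol_commute_iff:
  "sol_mult (x, y, t) (x', y', t') = sol_mult (x', y', t') (x, y, t) \<longleftrightarrow>
    (exp t - 1) * x' = (exp t' - 1) * x \<and> (exp (- t) - 1) * y' = (exp (- t') - 1) * y"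
  by (auto simp: algebra_simps)

lemma sol_commute_height_zero:
  assumes "sol_mult a b = sol_mult b a" "sol_height a \<noteq> 0" "sol_height b = 0"
  shows "b = (0, 0, 0)"
proof -
  obtain xa ya ta where a: "a = (xa, ya, ta)" by (cases a)
  obtain xb yb tb where b: "b = (xb, yb, tb)" by (cases b)
  have "exp ta - 1 \<noteq> 0" "exp (- ta) - 1 \<noteq> 0" using assms(2) a by auto
  then show ?thesis using assms(1,3) unfolding a b sol_commute_iff by auto
qed

lemma proportional_trans:
  fixes a b c xa xb xc :: real
  assumes "b \<noteq> 0" "a * xb = b * xa" "b * xc = c * xb"
  shows "a * xc = c * xa"
proof -
  have "b * (a * xc) = c * (a * xb)" using assms(3) by simp
  also have "\<dots> = b * (c * xa)" using assms(2) by simp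
  finally show ?thesis using assms(1) by simp
qed

text \<open>Off the height-zero subgroup, commuting is an equivalence relation: all centralisers
  there are one-parameter subgroups.\<close>

lemma sol_commute_trans:
  assumes "sol_mult a b = sol_mult b a" "sol_mult b c = sol_mult c b"
    and "sol_height b \<noteq> 0"
  shows "sol_mult a c = sol_mult c a"
proof -
  obtain xa ya ta where a: "a = (xa, ya, ta)" by (cases a)
  obtain xb yb tb where b: "b = (xb, yb, tb)" by (cases b)
  obtain xc yc tc where c: "c = (xc, yc, tc)" by (cases c)
  have tb: "exp tb - 1 \<noteq> 0" "exp (- tb) - 1 \<noteq> 0" using assms(3) b by auto
  show ?thesis
    using assms(1,2) unfolding a b c sol_commute_iff
    by (metis proportional_trans[OF tb(1)] proportional_trans[OF tb(2)])
qed

lemma sol_commute_mult: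
  assumes "sol_mult a x = sol_mult x a" "sol_mult a y = sol_mult y a"
  shows "sol_mult a (sol_mult x y) = sol_mult (sol_mult x y) a"
  by (metis assms sol_mult_assoc)

lemma commuting_sets_common_centraliser:
  assumes comm: "\<forall>a\<in>A. \<forall>b\<in>B. sol_mult a b = sol_mult b a"
    and a: "a \<in> A" "sol_height a \<noteq> 0" and "infinite B"
  shows "\<forall>x\<in>A \<union> B. sol_mult a x = sol_mult x a"
proof -
  have a_B: "\<forall>b\<in>B. sol_mult a b = sol_mult b a" using comm a(1) by blast
  obtain b where b: "b \<in> B" "sol_height b \<noteq> 0"
  proof -
    have "\<not> B \<subseteq> {(0, 0, 0)}" using \<open>infinite B\<close> finite_subset by blast
    then show thesis using that sol_commute_height_zero a_B a(2) by blast
  qed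
  have "sol_mult a x = sol_mult x a" if "x \<in> A" for x
    using sol_commute_trans[of a b x] a_B b comm that by auto
  then show ?thesis using a_B by blast
qed

definition sol_cocompact :: "(real \<times> real \<times> real) set \<Rightarrow> bool" where
  "sol_cocompact H \<longleftrightarrow> (\<exists>K. compact K \<and> (\<Union>h\<in>H. sol_mult h ` K) = UNIV)"

lemma cocompact_lattice_imp_sol_cocompact: "cocompact_lattice L \<Longrightarrow> sol_cocompact L"
  by (auto simp: cocompact_lattice_def sol_cocompact_def)

lemma sol_cocompact_infinite:
  assumes "sol_cocompact H"
  shows "infinite H"
proof
  assume "finite H"
  obtain K where "compact K" and cover: "(\<Union>h\<in>H. sol_mult h ` K) = UNIV"
    using assms by (auto simp: sol_cocompact_def)
  have "compact (\<Union>h\<in>H. sol_mult h ` K)"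
    using \<open>finite H\<close> \<open>compact K\<close> by (intro compact_UN compact_sol_mult_image)
  then have "bounded (UNIV :: (real \<times> real \<times> real) set)"
    using cover compact_imp_bounded by metis
  then show False by simp
qed

lemma compact_coordinate_bound:
  fixes K :: "(real \<times> real \<times> real) set"
  assumes "compact K"
  obtains B where "\<And>k. k \<in> K \<Longrightarrow> \<bar>fst k\<bar> \<le> B \<and> \<bar>sol_height k\<bar> \<le> B"
proof -
  obtain B where B: "\<And>k. k \<in> K \<Longrightarrow> norm k \<le> B"
    using compact_imp_bounded[OF assms] by (auto simp: bounded_iff)
  have norm_bound: "\<bar>fst k\<bar> \<le> norm k \<and> \<bar>sol_height k\<bar> \<le> norm k" for k :: "real \<times> real \<times> real"
  proof -
    obtain x y t where k: "k = (x, y, t)" by (cases k)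
    have "norm x \<le> norm (x, y, t)" "norm (y, t) \<le> norm (x, y, t)" "norm t \<le> norm (y, t)"
      by (rule norm_fst_le norm_snd_le)+
    then show ?thesis unfolding k by (simp del: norm_Pair)
  qed
  show thesis
  proof (rule that)
    fix k assume "k \<in> K"
    then show "\<bar>fst k\<bar> \<le> B \<and> \<bar>sol_height k\<bar> \<le> B" using norm_bound[of k] B[of k] by linarith
  qed
qed

text \<open>Representatives of the finitely many cosets turn \<open>K\<close> into a compact set for \<open>H\<close>.\<close>

lemma sol_cocompact_finite_index:
  assumes "sol_cocompact L" "finite_index (Sol3\<lparr>carrier := L\<rparr>) H" "(0, 0, 0) \<in> H"
  shows "sol_cocompact H"
proof -
  let ?M = "Sol3\<lparr>carrier := L\<rparr>"
  obtain K where K: "compact K" and cover: "(\<Union>g\<in>L. sol_mult g ` K) = UNIV"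
    using assms(1) by (auto simp: sol_cocompact_def)
  have coset: "H #>\<^bsub>?M\<^esub> g = (\<lambda>h. sol_mult h g) ` H" for g
    by (auto simp: r_coset_def Sol3_def)
  have "rcosets\<^bsub>?M\<^esub> H = (\<lambda>g. H #>\<^bsub>?M\<^esub> g) ` L"
    by (auto simp: RCOSETS_def Sol3_def)
  moreover have "finite (rcosets\<^bsub>?M\<^esub> H)" using assms(2) by (simp add: finite_index_def)
  ultimately obtain R where "R \<subseteq> L" "finite R" and R: "rcosets\<^bsub>?M\<^esub> H = (\<lambda>g. H #>\<^bsub>?M\<^esub> g) ` R"
    using finite_subset_image[of "rcosets\<^bsub>?M\<^esub> H" "\<lambda>g. H #>\<^bsub>?M\<^esub> g" L] by auto
  define K' where "K' = (\<Union>r\<in>R. sol_mult r ` K)"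
  have "compact K'"
    unfolding K'_def using \<open>finite R\<close> K by (intro compact_UN compact_sol_mult_image)
  moreover have "p \<in> (\<Union>h\<in>H. sol_mult h ` K')" for p
  proof -
    obtain g k where g: "g \<in> L" "k \<in> K" "p = sol_mult g k" using cover by blast
    then have "H #>\<^bsub>?M\<^esub> g \<in> rcosets\<^bsub>?M\<^esub> H" by (auto simp: RCOSETS_def Sol3_def)
    then obtain r where r: "r \<in> R" "H #>\<^bsub>?M\<^esub> g = H #>\<^bsub>?M\<^esub> r" using R by blast
    have "g \<in> H #>\<^bsub>?M\<^esub> g"
      using assms(3) sol_mult_left_one[of g] unfolding coset by (metis image_eqI)
    then obtain h where h: "h \<in> H" "g = sol_mult h r" using r(2) unfolding coset by blast
    have "p = sol_mult h (sol_mult r k)" using g(3) h(2) sol_mult_assoc by simp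
    moreover have "sol_mult r k \<in> K'" using r(1) g(2) by (auto simp: K'_def)
    ultimately show ?thesis using h(1) by blast
  qed
  ultimately show ?thesis unfolding sol_cocompact_def by blast
qed

lemma not_sol_cocompact_height_zero:
  assumes "\<forall>h\<in>H. sol_height h = 0"
  shows "\<not> sol_cocompact H"
proof
  assume "sol_cocompact H"
  then obtain K where K: "compact K" and cover: "(\<Union>h\<in>H. sol_mult h ` K) = UNIV"
    by (auto simp: sol_cocompact_def)
  obtain B where B: "\<And>k. k \<in> K \<Longrightarrow> \<bar>fst k\<bar> \<le> B \<and> \<bar>sol_height k\<bar> \<le> B"
    using compact_coordinate_bound[OF K] by blast
  have "(0, 0, B + 1) \<in> (\<Union>h\<in>H. sol_mult h ` K)" using cover by simp
  then obtain h k where "h \<in> H" "k \<in> K" "(0, 0, B + 1) = sol_mult h k" by blast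
  then have "sol_height (0, 0, B + 1) = sol_height h + sol_height k"
    by (simp only: sol_height_mult)
  then have "B + 1 = sol_height k" using assms \<open>h \<in> H\<close> by simp
  then show False using B[OF \<open>k \<in> K\<close>] by linarith
qed

lemma not_sol_cocompact_centraliser:
  assumes "sol_height a \<noteq> 0" "\<forall>h\<in>H. sol_mult a h = sol_mult h a"
  shows "\<not> sol_cocompact H"
proof
  assume "sol_cocompact H"
  then obtain K where K: "compact K" and cover: "(\<Union>h\<in>H. sol_mult h ` K) = UNIV"
    by (auto simp: sol_cocompact_def)
  obtain B where B: "\<And>k. k \<in> K \<Longrightarrow> \<bar>fst k\<bar> \<le> B \<and> \<bar>sol_height k\<bar> \<le> B"
    using compact_coordinate_bound[OF K] by blast
  obtain xa ya ta where a: "a = (xa, ya, ta)" by (cases a)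
  have gap: "\<bar>1 - exp ta\<bar> > 0" using assms(1) a by simp
  define far where "far = \<bar>xa\<bar> * (1 + exp B) / \<bar>1 - exp ta\<bar> + exp B * B + 1"
  have "(far, 0, 0) \<in> (\<Union>h\<in>H. sol_mult h ` K)" using cover by simp
  then obtain h k where hk: "h \<in> H" "k \<in> K" "(far, 0, 0) = sol_mult h k" by blast
  obtain x y s where h: "h = (x, y, s)" by (cases h)
  obtain k1 k2 k3 where k: "k = (k1, k2, k3)" by (cases k)
  have kB: "\<bar>k1\<bar> \<le> B" "\<bar>k3\<bar> \<le> B" using B[OF hk(2)] k by auto
  have far: "far = x + exp s * k1" and "0 = s + k3" using hk(3) by (auto simp: h k)
  then have "exp s \<le> exp B" using kB by simp
  have "x * (1 - exp ta) = xa * (1 - exp s)"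
    using assms(2) hk(1) by (auto simp: a h algebra_simps)
  moreover have "\<bar>1 - exp s\<bar> \<le> 1 + exp B"
    using \<open>exp s \<le> exp B\<close> exp_gt_zero[of s] exp_gt_zero[of B] by linarith
  ultimately have "\<bar>x\<bar> * \<bar>1 - exp ta\<bar> \<le> \<bar>xa\<bar> * (1 + exp B)"
    by (metis abs_mult abs_ge_zero mult_left_mono)
  then have "\<bar>x\<bar> \<le> \<bar>xa\<bar> * (1 + exp B) / \<bar>1 - exp ta\<bar>"
    using gap by (simp add: pos_le_divide_eq)
  moreover have "exp s * k1 \<le> exp B * B"
  proof -
    have "exp s * k1 \<le> exp s * \<bar>k1\<bar>" by simp
    also have "\<dots> \<le> exp B * B" using \<open>exp s \<le> exp B\<close> kB(1) by (intro mult_mono) auto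
    finally show ?thesis .
  qed
  ultimately show False using far unfolding far_def by linarith
qed

lemma not_sol_cocompact_commuting_product:
  assumes comm: "\<forall>a\<in>A. \<forall>b\<in>B. sol_mult a b = sol_mult b a"
    and "infinite A" "infinite B"
    and H: "\<forall>h\<in>H. \<exists>a\<in>A. \<exists>b\<in>B. h = sol_mult a b"
  shows "\<not> sol_cocompact H"
proof (cases "\<forall>h\<in>H. sol_height h = 0")
  case True
  then show ?thesis by (rule not_sol_cocompact_height_zero)
next
  case False
  then obtain h where "h \<in> H" "sol_height h \<noteq> 0" by blast
  then obtain a b where ab: "a \<in> A" "b \<in> B" "sol_height a + sol_height b \<noteq> 0"
    using H sol_height_mult by metis
  obtain c where c: "sol_height c \<noteq> 0" and c_comm: "\<forall>x\<in>A \<union> B. sol_mult c x = sol_mult x c"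
  proof (cases "sol_height a = 0")
    case True
    have "\<forall>b\<in>B. \<forall>a\<in>A. sol_mult b a = sol_mult a b" using comm by auto
    then have "\<forall>x\<in>B \<union> A. sol_mult b x = sol_mult x b"
      using commuting_sets_common_centraliser ab(2,3) True \<open>infinite A\<close> by simp
    then show thesis using that ab(3) True by (simp add: Un_commute)
  next
    case False
    then show thesis
      using that commuting_sets_common_centraliser[OF comm ab(1)] \<open>infinite B\<close> by blast
  qed
  have "sol_mult c h = sol_mult h c" if "h \<in> H" for h
  proof -
    obtain a b where "a \<in> A" "b \<in> B" "h = sol_mult a b" using H \<open>h \<in> H\<close> by blast
    then show ?thesis using c_comm sol_commute_mult[of c a b] by simp
  qed
  then show ?thesis using not_sol_cocompact_centraliser[OF c] by blast
qed

lemma DirProd_hom_split: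
  assumes "monoid G1" "monoid G2" "\<phi> \<in> hom (G1 \<times>\<times> G2) M"
    and "g \<in> carrier G1" "h \<in> carrier G2"
  shows "\<phi> (g, h) = \<phi> (g, \<one>\<^bsub>G2\<^esub>) \<otimes>\<^bsub>M\<^esub> \<phi> (\<one>\<^bsub>G1\<^esub>, h)"
    and "\<phi> (g, h) = \<phi> (\<one>\<^bsub>G1\<^esub>, h) \<otimes>\<^bsub>M\<^esub> \<phi> (g, \<one>\<^bsub>G2\<^esub>)"
proof -
  have g: "(g, \<one>\<^bsub>G2\<^esub>) \<in> carrier (G1 \<times>\<times> G2)" and h: "(\<one>\<^bsub>G1\<^esub>, h) \<in> carrier (G1 \<times>\<times> G2)"
    using assms by (simp_all add: monoid.one_closed)
  have "(g, \<one>\<^bsub>G2\<^esub>) \<otimes>\<^bsub>G1 \<times>\<times> G2\<^esub> (\<one>\<^bsub>G1\<^esub>, h) = (g, h)"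
    and "(\<one>\<^bsub>G1\<^esub>, h) \<otimes>\<^bsub>G1 \<times>\<times> G2\<^esub> (g, \<one>\<^bsub>G2\<^esub>) = (g, h)"
    using assms by (simp_all add: monoid.l_one monoid.r_one)
  then show "\<phi> (g, h) = \<phi> (g, \<one>\<^bsub>G2\<^esub>) \<otimes>\<^bsub>M\<^esub> \<phi> (\<one>\<^bsub>G1\<^esub>, h)"
    and "\<phi> (g, h) = \<phi> (\<one>\<^bsub>G1\<^esub>, h) \<otimes>\<^bsub>M\<^esub> \<phi> (g, \<one>\<^bsub>G2\<^esub>)"
    using hom_mult[OF assms(3) g h] hom_mult[OF assms(3) h g] by simp_all
qed

theorem corollary3p7:
  fixes L :: "(real \<times> real \<times> real) set"
  assumes "cocompact_lattice L"
  shows "infinite L \<and>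
    (\<forall>(G1 :: 'a monoid) (G2 :: 'b monoid) \<phi>.
        group G1 \<and> group G2 \<and> \<phi> \<in> hom (G1 \<times>\<times> G2) (Sol3\<lparr>carrier := L\<rparr>) \<and>
        finite_index (Sol3\<lparr>carrier := L\<rparr>) (\<phi> ` carrier (G1 \<times>\<times> G2))
      \<longrightarrow> finite (\<phi> ` ((\<lambda>g. (g, \<one>\<^bsub>G2\<^esub>)) ` carrier G1)) \<or>
          finite (\<phi> ` ((\<lambda>h. (\<one>\<^bsub>G1\<^esub>, h)) ` carrier G2)))"
proof (intro conjI allI impI)
  have L: "sol_cocompact L" using assms by (rule cocompact_lattice_imp_sol_cocompact)
  then show "infinite L" by (rule sol_cocompact_infinite)
  fix G1 :: "'a monoid" and G2 :: "'b monoid" and \<phi>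
  assume "group G1 \<and> group G2 \<and> \<phi> \<in> hom (G1 \<times>\<times> G2) (Sol3\<lparr>carrier := L\<rparr>) \<and>
    finite_index (Sol3\<lparr>carrier := L\<rparr>) (\<phi> ` carrier (G1 \<times>\<times> G2))"
  then have G: "monoid G1" "monoid G2" and \<phi>: "\<phi> \<in> hom (G1 \<times>\<times> G2) (Sol3\<lparr>carrier := L\<rparr>)"
    and fi: "finite_index (Sol3\<lparr>carrier := L\<rparr>) (\<phi> ` carrier (G1 \<times>\<times> G2))"
    by (auto simp: group.is_monoid)
  define A where "A = \<phi> ` ((\<lambda>g. (g, \<one>\<^bsub>G2\<^esub>)) ` carrier G1)"
  define B where "B = \<phi> ` ((\<lambda>h. (\<one>\<^bsub>G1\<^esub>, h)) ` carrier G2)"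
  define H where "H = \<phi> ` carrier (G1 \<times>\<times> G2)"
  note split = DirProd_hom_split[OF G \<phi>, unfolded Sol3_def, simplified]
  have "\<forall>a\<in>A. \<forall>b\<in>B. sol_mult a b = sol_mult b a"
    unfolding A_def B_def using split by auto
  moreover have "\<forall>h\<in>H. \<exists>a\<in>A. \<exists>b\<in>B. h = sol_mult a b"
    unfolding H_def A_def B_def using split(1) by auto
  moreover have "(0, 0, 0) \<in> H"
  proof -
    have one: "\<one>\<^bsub>G1\<^esub> \<in> carrier G1" "\<one>\<^bsub>G2\<^esub> \<in> carrier G2"
      using G by (simp_all add: monoid.one_closed)
    then have "\<phi> (\<one>\<^bsub>G1\<^esub>, \<one>\<^bsub>G2\<^esub>) = (0, 0, 0)"
      using split(1) sol_mult_idem_iff by metis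
    then show ?thesis unfolding H_def using one by (metis SigmaI carrier_DirProd image_eqI)
  qed
  then have "sol_cocompact H" using sol_cocompact_finite_index L fi unfolding H_def by blast
  ultimately show "finite A \<or> finite B"
    using not_sol_cocompact_commuting_product by blast
qed

end
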